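(* For $\pi\in S_n$ and $w\in I_n$ let $\mathrm{inv}_w(\pi)=\#\big(\mathrm{Inv}(\pi)\cap\mathrm{Pair}(w)\big)$. Then for all $\sigma,\pi\in S_n$ and $w\in I_n$, $$(-1)^{\mathrm{inv}_w(\sigma\pi)}=(-1)^{\mathrm{inv}_w(\pi)}\cdot(-1)^{\mathrm{inv}_{\pi w\pi^{-1}}(\sigma)}.$$ Consequently the formula $\rho(\pi)C_w=(-1)^{\mathrm{inv}_w(\pi)}C_{\pi w\pi^{-1}}$ ($\pi\in S_n$, $w\in I_n$) defines a representation of $S_n$ on $V_n$, and for each $s\in S$ it agrees with $\rho(s)C_w=\mathrm{sign}(s;w)C_{sws}$.
   Context: $I_n$ is the set of involutions (including the identity) of $S_n$; $V_n$ is the $\mathbb{Q}$-vector space with basis $\{C_w:w\in I_n\}$. $\mathrm{Inv}(\pi)=\{\{i,j\}: (j-i)(\pi(j)-\pi(i))<0\}$. For $w\in I_n$, $\mathrm{Pair}(w)$ is the set of 2-cycles of $w$, regarded as unordered 2-element subsets of $[n]$. $S=\{s_i=(i,i+1):1\le i\le n-1\}$; $\mathrm{sign}(s;w)=-1$ if $sws=w$ and $s\in\mathrm{Des}(w)$, and $1$ otherwise, where $s_i\in\mathrm{Des}(w)$ iff $w(i)>w(i+1)$. *)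

theory Defs
  imports "HOL-Combinatorics.Combinatorics"
begin

text \<open>Permutations of [n] = {1..n} are functions nat => nat permuting {1..n};
  the product sigma pi is composition sigma o pi (apply pi first).\<close>

definition Sym :: "nat \<Rightarrow> (nat \<Rightarrow> nat) set" where
  "Sym n = {p. p permutes {1..n}}"

definition Invol :: "nat \<Rightarrow> (nat \<Rightarrow> nat) set" where
  "Invol n = {w. w permutes {1..n} \<and> w \<circ> w = id}"

definition Inv :: "nat \<Rightarrow> (nat \<Rightarrow> nat) \<Rightarrow> nat set set" where
  "Inv n p = {{i, j} | i j. i \<in> {1..n} \<and> j \<in> {1..n} \<and>
                 (int j - int i) * (int (p j) - int (p i)) < 0}"

definition Pair :: "nat \<Rightarrow> (nat \<Rightarrow> nat) \<Rightarrow> nat set set" where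
  "Pair n w = {{i, w i} | i. i \<in> {1..n} \<and> w i \<noteq> i}"

definition inv_w :: "nat \<Rightarrow> (nat \<Rightarrow> nat) \<Rightarrow> (nat \<Rightarrow> nat) \<Rightarrow> nat" where
  "inv_w n w p = card (Inv n p \<inter> Pair n w)"

text \<open>V_n: Q-vector space with basis C_w (w in I_n), represented as
  coefficient functions supported on I_n.\<close>
definition V :: "nat \<Rightarrow> ((nat \<Rightarrow> nat) \<Rightarrow> rat) set" where
  "V n = {v. \<forall>u. u \<notin> Invol n \<longrightarrow> v u = 0}"

definition C :: "(nat \<Rightarrow> nat) \<Rightarrow> ((nat \<Rightarrow> nat) \<Rightarrow> rat)" where
  "C w = (\<lambda>u. if u = w then 1 else 0)"

text \<open>The linear map rho(pi): C_w |-> (-1)^(inv_w(pi)) C_(pi w pi^-1), extended linearly.\<close>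
definition rho :: "nat \<Rightarrow> (nat \<Rightarrow> nat) \<Rightarrow> ((nat \<Rightarrow> nat) \<Rightarrow> rat) \<Rightarrow> ((nat \<Rightarrow> nat) \<Rightarrow> rat)" where
  "rho n p v = (\<lambda>u. if u \<in> Invol n
       then (-1) ^ inv_w n (inv p \<circ> u \<circ> p) p * v (inv p \<circ> u \<circ> p) else 0)"

definition s :: "nat \<Rightarrow> nat \<Rightarrow> nat" where
  "s i = transpose i (i + 1)"

definition sgn_s :: "nat \<Rightarrow> (nat \<Rightarrow> nat) \<Rightarrow> rat" where
  "sgn_s i w = (if s i \<circ> w \<circ> s i = w \<and> w i > w (i + 1) then -1 else 1)"

end

theory Submission imports Defs begin

(* Proof idea.  (-1)^inv_w(pi) is the product, over the 2-cycles {i, w i} of w, of the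
   sign +-1 recording whether pi inverts that pair.  For a single pair {i,j} the sign
   is multiplicative along compositions: sigma o pi inverts {i,j} iff exactly one of
   "pi inverts {i,j}" and "sigma inverts {pi i, pi j}" holds, because
   (j-i)(sigma(pi j)-sigma(pi i)) has the sign of the product of
   (j-i)(pi j - pi i) and (pi j - pi i)(sigma(pi j)-sigma(pi i)).  Since pi maps the
   2-cycles of w bijectively onto the 2-cycles of pi w pi^-1, taking the product
   over all pairs gives the cocycle identity (first claim).
   Finally, for a simple transposition s_i the only inversion is {i, i+1}, so
   inv_w(s_i) is 1 iff w swaps i and i+1, which is precisely when sign(s_i; w) = -1. *)

section \<open>Inversions and 2-cycles\<close>

lemma Inv_pair_iff:
  assumes "i \<in> {1..n}" "j \<in> {1..n}"
  shows "{i, j} \<in> Inv n p \<longleftrightarrow> (int j - int i) * (int (p j) - int (p i)) < 0"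
proof
  assume "{i, j} \<in> Inv n p"
  then obtain a b where ab: "{i, j} = {a, b}" "(int b - int a) * (int (p b) - int (p a)) < 0"
    unfolding Inv_def by blast
  have symm: "(int a - int b) * (int (p a) - int (p b)) = (int b - int a) * (int (p b) - int (p a))"
    by (simp add: algebra_simps)
  from ab(1) have "(i = a \<and> j = b) \<or> (i = b \<and> j = a)"
    by (auto simp: doubleton_eq_iff)
  then show "(int j - int i) * (int (p j) - int (p i)) < 0"
    using ab(2) symm by auto
next
  assume "(int j - int i) * (int (p j) - int (p i)) < 0"
  then show "{i, j} \<in> Inv n p"
    using assms unfolding Inv_def by blast
qed

lemma Inv_id: "Inv n id = {}"
  unfolding Inv_def by (auto simp: mult_less_0_iff)

lemma Pair_image: "Defs.Pair n w = (\<lambda>i. {i, w i}) ` {i \<in> {1..n}. w i \<noteq> i}"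
  unfolding Pair_def by auto

lemma finite_Pair: "finite (Defs.Pair n w)"
  unfolding Pair_image by simp

lemma Pair_conjugate:
  assumes p: "p permutes {1..n}"
  shows "Defs.Pair n (p \<circ> w \<circ> inv p) = (`) p ` Defs.Pair n w"
proof
  show "Defs.Pair n (p \<circ> w \<circ> inv p) \<subseteq> (`) p ` Defs.Pair n w"
  proof
    fix X assume "X \<in> Defs.Pair n (p \<circ> w \<circ> inv p)"
    then obtain k where k: "X = {k, p (w (inv p k))}" "k \<in> {1..n}" "p (w (inv p k)) \<noteq> k"
      unfolding Pair_def by auto
    define i where "i = inv p k"
    have pi: "p i = k"
      using permutes_inverses(1)[OF p] i_def by simp
    have "i \<in> {1..n}"
      using permutes_in_image[OF permutes_inv[OF p]] k(2) i_def by blast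
    moreover have "w i \<noteq> i"
      using k(3) pi i_def by auto
    ultimately have "{i, w i} \<in> Defs.Pair n w"
      unfolding Pair_def by blast
    moreover have "X = p ` {i, w i}"
      using k(1) pi i_def by auto
    ultimately show "X \<in> (`) p ` Defs.Pair n w" by blast
  qed
next
  show "(`) p ` Defs.Pair n w \<subseteq> Defs.Pair n (p \<circ> w \<circ> inv p)"
  proof
    fix X assume "X \<in> (`) p ` Defs.Pair n w"
    then obtain i where i: "X = p ` {i, w i}" "i \<in> {1..n}" "w i \<noteq> i"
      unfolding Pair_def by auto
    have "p (w i) \<noteq> p i"
      using i(3) permutes_inj[OF p] by (auto dest: injD)
    moreover have "p i \<in> {1..n}"
      using permutes_in_image[OF p] i(2) by blast
    ultimately show "X \<in> Defs.Pair n (p \<circ> w \<circ> inv p)"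
      unfolding Pair_def using i(1) permutes_inverses(2)[OF p]
      by (auto intro!: exI[of _ "p i"])
  qed
qed

section \<open>The sign (-1)^inv_w as a product over 2-cycles\<close>

definition inversion_sign :: "nat \<Rightarrow> (nat \<Rightarrow> nat) \<Rightarrow> nat set \<Rightarrow> 'a::comm_ring_1" where
  "inversion_sign n p P = (if P \<in> Inv n p then -1 else 1)"

lemma neg_one_power_card_Int:
  assumes "finite P"
  shows "(-1::'a::comm_ring_1) ^ card (S \<inter> P) = (\<Prod>x\<in>P. if x \<in> S then -1 else 1)"
proof -
  have "(\<Prod>x\<in>P. if x \<in> S then -1 else (1::'a))
      = (\<Prod>x\<in>P \<inter> {x. x \<in> S}. -1) * (\<Prod>x\<in>P \<inter> - {x. x \<in> S}. 1)"
    by (rule prod.If_cases[OF assms])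
  also have "\<dots> = (-1) ^ card (S \<inter> P)"
    by (simp add: Int_commute)
  finally show ?thesis by simp
qed

lemma inv_w_sign_prod:
  "(-1::'a::comm_ring_1) ^ inv_w n w p = (\<Prod>P\<in>Defs.Pair n w. inversion_sign n p P)"
  unfolding inv_w_def inversion_sign_def by (rule neg_one_power_card_Int[OF finite_Pair])

text \<open>For nonzero integers, sign(a c) = sign(a b) sign(b c), since (a b)(b c) = a c b^2.\<close>
lemma sign_product_cocycle:
  fixes a b c :: int
  assumes "a \<noteq> 0" "b \<noteq> 0" "c \<noteq> 0"
  shows "(if a * c < 0 then -1 else 1 :: 'a::comm_ring_1)
       = (if a * b < 0 then -1 else 1) * (if b * c < 0 then -1 else 1)"
  using assms by (auto simp: mult_less_0_iff)

lemma inversion_sign_comp: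
  assumes \<sigma>: "\<sigma> permutes {1..n}" and \<pi>: "\<pi> permutes {1..n}"
    and ij: "i \<in> {1..n}" "j \<in> {1..n}" "i \<noteq> j"
  shows "inversion_sign n (\<sigma> \<circ> \<pi>) {i, j}
       = (inversion_sign n \<pi> {i, j} * inversion_sign n \<sigma> (\<pi> ` {i, j}) :: 'a::comm_ring_1)"
proof -
  have \<pi>_ne: "\<pi> i \<noteq> \<pi> j"
    using ij(3) permutes_inj[OF \<pi>] by (auto dest: injD)
  have \<sigma>\<pi>_ne: "\<sigma> (\<pi> i) \<noteq> \<sigma> (\<pi> j)"
    using \<pi>_ne permutes_inj[OF \<sigma>] by (auto dest: injD)
  have \<pi>_in: "\<pi> i \<in> {1..n}" "\<pi> j \<in> {1..n}"
    using permutes_in_image[OF \<pi>] ij by auto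
  show ?thesis
    unfolding inversion_sign_def image_insert image_empty
      Inv_pair_iff[OF ij(1,2)] Inv_pair_iff[OF \<pi>_in] o_apply
    by (rule sign_product_cocycle) (use ij(3) \<pi>_ne \<sigma>\<pi>_ne in auto)
qed

theorem inv_w_cocycle:
  assumes \<sigma>: "\<sigma> permutes {1..n}" and \<pi>: "\<pi> permutes {1..n}" and w: "w permutes {1..n}"
  shows "(-1::'a::comm_ring_1) ^ inv_w n w (\<sigma> \<circ> \<pi>)
       = (-1) ^ inv_w n w \<pi> * (-1) ^ inv_w n (\<pi> \<circ> w \<circ> inv \<pi>) \<sigma>"
proof -
  have pairwise: "inversion_sign n (\<sigma> \<circ> \<pi>) P
      = (inversion_sign n \<pi> P * inversion_sign n \<sigma> (\<pi> ` P) :: 'a)"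
    if P: "P \<in> Defs.Pair n w" for P
  proof -
    obtain i where i: "P = {i, w i}" "i \<in> {1..n}" "w i \<noteq> i"
      using P unfolding Pair_image by blast
    have "w i \<in> {1..n}"
      using permutes_in_image[OF w] i(2) by blast
    from inversion_sign_comp[OF \<sigma> \<pi> i(2) this] i(3)
    show ?thesis
      unfolding i(1) by auto
  qed
  have inj: "inj_on ((`) \<pi>) (Defs.Pair n w)"
    using permutes_inj[OF \<pi>] by (auto simp: inj_on_def inj_image_eq_iff)
  have "(-1::'a) ^ inv_w n w (\<sigma> \<circ> \<pi>) = (\<Prod>P\<in>Defs.Pair n w. inversion_sign n (\<sigma> \<circ> \<pi>) P)"
    by (rule inv_w_sign_prod)
  also have "\<dots> = (\<Prod>P\<in>Defs.Pair n w. inversion_sign n \<pi> P)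
                 * (\<Prod>P\<in>Defs.Pair n w. inversion_sign n \<sigma> (\<pi> ` P))"
    using pairwise by (simp add: prod.distrib)
  also have "(\<Prod>P\<in>Defs.Pair n w. inversion_sign n \<sigma> (\<pi> ` P))
           = (\<Prod>Q\<in>Defs.Pair n (\<pi> \<circ> w \<circ> inv \<pi>). inversion_sign n \<sigma> Q)"
    unfolding Pair_conjugate[OF \<pi>] prod.reindex[OF inj] by simp
  finally show ?thesis
    by (simp only: inv_w_sign_prod)
qed

lemma Invol_permutes: "w \<in> Invol n \<Longrightarrow> w permutes {1..n}"
  unfolding Invol_def by simp

lemma Invol_apply_apply: "w \<in> Invol n \<Longrightarrow> w (w x) = x"
  unfolding Invol_def by (simp add: pointfree_idE)

lemma conjugate_Invol:
  assumes p: "p permutes {1..n}" and w: "w \<in> Invol n"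
  shows "p \<circ> w \<circ> inv p \<in> Invol n"
proof -
  have w': "w permutes {1..n}" "w \<circ> w = id"
    using w unfolding Invol_def by auto
  have "p \<circ> w \<circ> inv p permutes {1..n}"
    by (intro permutes_compose permutes_inv p w'(1))
  moreover have "(p \<circ> w \<circ> inv p) \<circ> (p \<circ> w \<circ> inv p) = p \<circ> (w \<circ> (inv p \<circ> p) \<circ> w) \<circ> inv p"
    by (simp add: o_assoc)
  then have "(p \<circ> w \<circ> inv p) \<circ> (p \<circ> w \<circ> inv p) = id"
    by (simp add: permutes_inv_o[OF p] w'(2))
  ultimately show ?thesis
    unfolding Invol_def by blast
qed

lemma inverse_conjugate_Invol:
  assumes p: "p permutes {1..n}" and w: "w \<in> Invol n"
  shows "inv p \<circ> w \<circ> p \<in> Invol n"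
  using conjugate_Invol[OF permutes_inv[OF p] w] inv_inv_eq[OF permutes_bij[OF p]] by simp

lemma inverse_conjugate_eq_iff:
  assumes p: "p permutes {1..n}"
  shows "inv p \<circ> u \<circ> p = w \<longleftrightarrow> u = p \<circ> w \<circ> inv p"
proof
  assume "inv p \<circ> u \<circ> p = w"
  then have "(p \<circ> inv p) \<circ> u \<circ> (p \<circ> inv p) = p \<circ> w \<circ> inv p"
    by (auto simp: comp_assoc)
  then show "u = p \<circ> w \<circ> inv p"
    by (simp add: permutes_inv_o[OF p])
next
  assume "u = p \<circ> w \<circ> inv p"
  then have "inv p \<circ> u \<circ> p = (inv p \<circ> p) \<circ> w \<circ> (inv p \<circ> p)"
    by (simp add: comp_assoc)
  then show "inv p \<circ> u \<circ> p = w"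
    by (simp add: permutes_inv_o[OF p])
qed

section \<open>The representation rho\<close>

lemma rho_C:
  assumes p: "p permutes {1..n}" and w: "w \<in> Invol n"
  shows "rho n p (C w) = (\<lambda>u. (-1) ^ inv_w n w p * C (p \<circ> w \<circ> inv p) u)"
proof
  fix u
  show "rho n p (C w) u = (-1) ^ inv_w n w p * C (p \<circ> w \<circ> inv p) u"
  proof (cases "u \<in> Invol n")
    case True
    then show ?thesis
      unfolding rho_def C_def using inverse_conjugate_eq_iff[OF p, of u w] by auto
  next
    case False
    then have "u \<noteq> p \<circ> w \<circ> inv p"
      using conjugate_Invol[OF p w] by auto
    with False show ?thesis
      unfolding rho_def C_def by auto
  qed
qed

text \<open>rho(p) maps into V_n, and rho(id) fixes V_n since the identity has no inversions.\<close>
lemma rho_in_V: "rho n p v \<in> V n"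
  unfolding rho_def V_def by auto

lemma rho_id: "v \<in> V n \<Longrightarrow> rho n id v = v"
  unfolding rho_def V_def inv_w_def by (auto simp: Inv_id fun_eq_iff)

text \<open>rho is multiplicative; the signs combine by the cocycle identity.\<close>
lemma rho_comp:
  assumes \<sigma>: "\<sigma> permutes {1..n}" and \<pi>: "\<pi> permutes {1..n}"
  shows "rho n (\<sigma> \<circ> \<pi>) v = rho n \<sigma> (rho n \<pi> v)"
proof
  fix u
  show "rho n (\<sigma> \<circ> \<pi>) v u = rho n \<sigma> (rho n \<pi> v) u"
  proof (cases "u \<in> Invol n")
    case False
    then show ?thesis unfolding rho_def by simp
  next
    case True
    define w' where "w' = inv \<sigma> \<circ> u \<circ> \<sigma>"
    define w where "w = inv \<pi> \<circ> w' \<circ> \<pi>"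
    have w'_Invol: "w' \<in> Invol n"
      unfolding w'_def using inverse_conjugate_Invol[OF \<sigma> True] .
    have w_perm: "w permutes {1..n}"
      unfolding w_def by (rule Invol_permutes[OF inverse_conjugate_Invol[OF \<pi> w'_Invol]])
    have comp_conj: "inv (\<sigma> \<circ> \<pi>) \<circ> u \<circ> (\<sigma> \<circ> \<pi>) = w"
      unfolding w_def w'_def o_inv_distrib[OF permutes_bij[OF \<sigma>] permutes_bij[OF \<pi>]]
      by (simp add: o_assoc)
    have "\<pi> \<circ> w \<circ> inv \<pi> = w'"
      using inverse_conjugate_eq_iff[OF \<pi>, of w' w] w_def by simp
    then have sign: "(-1::rat) ^ inv_w n w (\<sigma> \<circ> \<pi>) = (-1) ^ inv_w n w \<pi> * (-1) ^ inv_w n w' \<sigma>"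
      using inv_w_cocycle[OF \<sigma> \<pi> w_perm] by simp
    show ?thesis
      unfolding rho_def using True w'_Invol
      by (simp add: comp_conj sign w'_def[symmetric] w_def[symmetric])
  qed
qed

section \<open>Simple transpositions\<close>

lemma Inv_s:
  assumes "i \<in> {1..<n}"
  shows "Inv n (s i) = {{i, i + 1}}"
proof
  show "Inv n (s i) \<subseteq> {{i, i + 1}}"
  proof
    fix X assume "X \<in> Inv n (s i)"
    then obtain a b where ab: "X = {a, b}" "(int b - int a) * (int (s i b) - int (s i a)) < 0"
      unfolding Inv_def by blast
    then have "(a = i \<and> b = i + 1) \<or> (a = i + 1 \<and> b = i)"
      unfolding s_def transpose_def by (auto simp: mult_less_0_iff split: if_splits)
    with ab(1) show "X \<in> {{i, i + 1}}" by auto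
  qed
next
  have "{i, i + 1} \<in> Inv n (s i)"
    using assms by (subst Inv_pair_iff) (auto simp: s_def)
  then show "{{i, i + 1}} \<subseteq> Inv n (s i)" by simp
qed

lemma inv_w_s:
  assumes i: "i \<in> {1..<n}" and w: "w \<in> Invol n"
  shows "inv_w n w (s i) = (if w i = i + 1 then 1 else 0)"
proof -
  note ww = Invol_apply_apply[OF w]
  have "{i, i + 1} \<in> Defs.Pair n w \<longleftrightarrow> w i = i + 1"
  proof
    assume "{i, i + 1} \<in> Defs.Pair n w"
    then obtain j where "{i, i + 1} = {j, w j}"
      unfolding Pair_def by auto
    then consider "j = i" "w j = i + 1" | "j = i + 1" "w j = i"
      by (auto simp: doubleton_eq_iff)
    then show "w i = i + 1"
    proof cases
      case 2
      then show ?thesis using ww[of "i + 1"] by simp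
    qed simp
  next
    assume "w i = i + 1"
    then show "{i, i + 1} \<in> Defs.Pair n w"
      using i unfolding Pair_def by force
  qed
  then show ?thesis
    unfolding inv_w_def Inv_s[OF i] by auto
qed

lemma adjacent_transpose_decreasing:
  "transpose i (i + 1) x < x \<Longrightarrow> x = (i::nat) + 1"
  by (simp add: transpose_def split: if_splits)

lemma sgn_s_Invol:
  assumes w: "w \<in> Invol n"
  shows "sgn_s i w = (if w i = i + 1 then -1 else 1)"
proof -
  let ?t = "transpose i (i + 1)"
  note ww = Invol_apply_apply[OF w]
  have "s i \<circ> w \<circ> s i = w \<and> w i > w (i + 1) \<longleftrightarrow> w i = i + 1"
  proof
    assume h: "s i \<circ> w \<circ> s i = w \<and> w i > w (i + 1)"
    then have "?t (w (?t (i + 1))) = w (i + 1)"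
      unfolding s_def by (metis comp_apply)
    then have "?t (w i) < w i"
      using h by simp
    then show "w i = i + 1"
      by (rule adjacent_transpose_decreasing)
  next
    assume swap: "w i = i + 1"
    then have swap': "w (i + 1) = i"
      using ww[of i] by simp
    have invw: "inv w = w"
      using w unfolding Invol_def by (auto intro: inv_unique_comp)
    have "?t \<circ> w = w \<circ> transpose (inv w i) (inv w (i + 1))"
      by (rule transpose_comp_eq[OF permutes_bij[OF Invol_permutes[OF w]]])
    also have "\<dots> = w \<circ> ?t"
      unfolding invw swap swap' by (simp add: transpose_commute)
    finally have "?t \<circ> w \<circ> ?t = w \<circ> (?t \<circ> ?t)"
      by (simp add: comp_assoc)
    then have "s i \<circ> w \<circ> s i = w"
      unfolding s_def by simp
    with swap swap' show "s i \<circ> w \<circ> s i = w \<and> w i > w (i + 1)"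
      by simp
  qed
  then show ?thesis
    unfolding sgn_s_def by auto
qed

lemma rho_s_C:
  assumes i: "i \<in> {1..<n}" and w: "w \<in> Invol n"
  shows "rho n (s i) (C w) = (\<lambda>u. sgn_s i w * C (s i \<circ> w \<circ> s i) u)"
proof -
  have "s i permutes {1..n}"
    unfolding s_def using i by (intro permutes_swap_id) auto
  from rho_C[OF this w]
  have "rho n (s i) (C w) = (\<lambda>u. (-1) ^ inv_w n w (s i) * C (s i \<circ> w \<circ> s i) u)"
    by (simp add: s_def)
  then show ?thesis
    unfolding inv_w_s[OF i w] sgn_s_Invol[OF w] by simp
qed

theorem mainTheorem2:
  fixes n :: nat
  shows "(\<forall>\<sigma>\<in>Sym n. \<forall>\<pi>\<in>Sym n. \<forall>w\<in>Invol n.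
            (-1::int) ^ inv_w n w (\<sigma> \<circ> \<pi>)
              = (-1) ^ inv_w n w \<pi> * (-1) ^ inv_w n (\<pi> \<circ> w \<circ> inv \<pi>) \<sigma>)
       \<and> (\<forall>\<pi>\<in>Sym n. \<forall>w\<in>Invol n.
            rho n \<pi> (C w) = (\<lambda>u. (-1) ^ inv_w n w \<pi> * C (\<pi> \<circ> w \<circ> inv \<pi>) u))
       \<and> (\<forall>\<pi>\<in>Sym n. \<forall>v\<in>V n. rho n \<pi> v \<in> V n)
       \<and> (\<forall>v\<in>V n. rho n id v = v)
       \<and> (\<forall>\<sigma>\<in>Sym n. \<forall>\<pi>\<in>Sym n. \<forall>v\<in>V n. rho n (\<sigma> \<circ> \<pi>) v = rho n \<sigma> (rho n \<pi> v))
       \<and> (\<forall>i\<in>{1..<n}. \<forall>w\<in>Invol n.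
            rho n (s i) (C w) = (\<lambda>u. sgn_s i w * C (s i \<circ> w \<circ> s i) u))"
proof (intro conjI ballI)
  fix \<sigma> \<pi> w assume "\<sigma> \<in> Sym n" "\<pi> \<in> Sym n" "w \<in> Invol n"
  then show "(-1::int) ^ inv_w n w (\<sigma> \<circ> \<pi>)
           = (-1) ^ inv_w n w \<pi> * (-1) ^ inv_w n (\<pi> \<circ> w \<circ> inv \<pi>) \<sigma>"
    unfolding Sym_def by (blast intro: inv_w_cocycle Invol_permutes)
qed (auto simp: Sym_def rho_C rho_in_V rho_id rho_comp rho_s_C)

end
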